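(* Let $(X,\tau_1,\tau_2)$ be a bitopological space, $i,j\in\{1,2\}$, $i\neq j$, which is $(i,j)_1$-nearly paralindelöf, $(i,j)$-regular and a $j$-$P$-space. If $X$ is $(i,j)$-weakly Lindelöf, then $(X,\tau_i)$ is Lindelöf.
   Context: $(X,\tau_1,\tau_2)$ is a bitopological space and $i,j\in\{1,2\}$, $i\neq j$. For $k\in\{1,2\}$, $k\text{-}\mathrm{int}$ and $k\text{-}\mathrm{cl}$ denote interior and closure with respect to $\tau_k$; "$k$-open" means $\tau_k$-open. A set $A$ is $(i,j)$-regular open if $A=i\text{-}\mathrm{int}(j\text{-}\mathrm{cl}(A))$. $X$ is $(i,j)$-regular if for each $x\in X$ and each $i$-open set $U$ containing $x$ there is an $i$-open set $V$ with $x\in V\subseteq j\text{-}\mathrm{cl}(V)\subseteq U$. A family $\mathcal V$ refines $\mathcal U$ if each member of $\mathcal V$ is contained in some member of $\mathcal U$; a family is a cover of $X$ if its union is $X$. A family is $k$-locally countable if every $x\in X$ has a $k$-open neighbourhood meeting at most countably many of its members. $X$ is a $k$-$P$-space if every intersection of countably many $k$-open sets is $k$-open. $X$ is $(i,j)_1$-nearly paralindelöf if every cover of $X$ by $(i,j)$-regular open sets has a refinement which is a cover of $X$ by $i$-open sets and which is $j$-locally countable. $X$ is $(i,j)$-weakly Lindelöf if every cover $\{U_\alpha:\alpha\in\Delta\}$ of $X$ by $i$-open sets has a countable subfamily $\{U_{\alpha_n}:n\in\mathbb N\}$ with $X=j\text{-}\mathrm{cl}(\bigcup_n U_{\alpha_n})$.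 *)

theory Defs
  imports "HOL-Analysis.Analysis"
begin

definition bitop :: "'a topology \<Rightarrow> 'a topology \<Rightarrow> nat \<Rightarrow> 'a topology" where
  "bitop \<tau>1 \<tau>2 k = (if k = 1 then \<tau>1 else \<tau>2)"

definition ij_regular_open :: "'a topology \<Rightarrow> 'a topology \<Rightarrow> 'a set \<Rightarrow> bool" where
  "ij_regular_open Ti Tj A \<longleftrightarrow> A = Ti interior_of (Tj closure_of A)"

definition ij_regular :: "'a topology \<Rightarrow> 'a topology \<Rightarrow> bool" where
  "ij_regular Ti Tj \<longleftrightarrow>
     (\<forall>x U. openin Ti U \<and> x \<in> U \<longrightarrow>
        (\<exists>V. openin Ti V \<and> x \<in> V \<and> V \<subseteq> Tj closure_of V \<and> Tj closure_of V \<subseteq> U))"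

definition refines :: "'a set set \<Rightarrow> 'a set set \<Rightarrow> bool" where
  "refines \<V> \<U> \<longleftrightarrow> (\<forall>V\<in>\<V>. \<exists>U\<in>\<U>. V \<subseteq> U)"

definition locally_countable :: "'a topology \<Rightarrow> 'a set set \<Rightarrow> bool" where
  "locally_countable T \<V> \<longleftrightarrow>
     (\<forall>x\<in>topspace T. \<exists>W. openin T W \<and> x \<in> W \<and> countable {V\<in>\<V>. V \<inter> W \<noteq> {}})"

text \<open>P-space: intersections of countably many (at least one) open sets are open
  (the empty intersection is the whole space, which is trivially open).\<close>
definition P_space :: "'a topology \<Rightarrow> bool" where
  "P_space T \<longleftrightarrow>
     (\<forall>\<U>. countable \<U> \<and> \<U> \<noteq> {} \<and> (\<forall>U\<in>\<U>. openin T U) \<longrightarrow> openin T (\<Inter>\<U>))"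

definition ij1_nearly_paralindelof :: "'a topology \<Rightarrow> 'a topology \<Rightarrow> bool" where
  "ij1_nearly_paralindelof Ti Tj \<longleftrightarrow>
     (\<forall>\<U>. (\<forall>U\<in>\<U>. ij_regular_open Ti Tj U) \<and> \<Union>\<U> = topspace Ti \<longrightarrow>
        (\<exists>\<V>. refines \<V> \<U> \<and> (\<forall>V\<in>\<V>. openin Ti V) \<and> \<Union>\<V> = topspace Ti
             \<and> locally_countable Tj \<V>))"

definition ij_weakly_Lindelof :: "'a topology \<Rightarrow> 'a topology \<Rightarrow> bool" where
  "ij_weakly_Lindelof Ti Tj \<longleftrightarrow>
     (\<forall>\<U>. (\<forall>U\<in>\<U>. openin Ti U) \<and> \<Union>\<U> = topspace Ti \<longrightarrow>
        (\<exists>\<C>. \<C> \<subseteq> \<U> \<and> countable \<C> \<and> Tj closure_of (\<Union>\<C>) = topspace Ti))"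

end

theory Submission
  imports Defs
begin

text \<open>Given an \<open>i\<close>-open cover \<open>\<U>\<close>, regularity yields a cover by \<open>(i,j)\<close>-regular open sets
  whose \<open>j\<close>-closures each lie in a member of \<open>\<U>\<close>. The nearly paralindelof property refines it to a
  \<open>j\<close>-locally countable \<open>i\<close>-open cover \<open>\<V>\<close>, the weakly Lindelof property extracts a countable
  \<open>\<C> \<subseteq> \<V>\<close> with \<open>j\<close>-dense union, and in a \<open>j\<close>-P-space the \<open>j\<close>-closure of a locally
  countable union is the union of the \<open>j\<close>-closures. Hence the \<open>j\<close>-closures of the members
  of \<open>\<C>\<close> cover \<open>X\<close>, and the members of \<open>\<U>\<close> containing them form a countable subcover.\<close>

lemma ij_regular_open_interior_closure:
  "ij_regular_open Ti Tj (Ti interior_of (Tj closure_of A))"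
proof -
  let ?B = "Ti interior_of (Tj closure_of A)"
  have "Tj closure_of ?B \<subseteq> Tj closure_of A"
    using closure_of_mono[of ?B "Tj closure_of A" Tj] interior_of_subset[of Ti "Tj closure_of A"]
    by simp
  then have "Ti interior_of (Tj closure_of ?B) \<subseteq> ?B"
    by (rule interior_of_mono)
  moreover have "?B \<subseteq> Tj closure_of ?B"
    using closure_of_subset[of ?B Tj] closure_of_subset_topspace[of Tj A]
      interior_of_subset[of Ti "Tj closure_of A"] by (meson order_trans)
  then have "?B \<subseteq> Ti interior_of (Tj closure_of ?B)"
    by (rule interior_of_maximal) simp
  ultimately show ?thesis
    unfolding ij_regular_open_def by (rule subset_antisym[symmetric])
qed

lemma locally_countable_subset:
  assumes "locally_countable T \<V>" and "\<C> \<subseteq> \<V>"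
  shows "locally_countable T \<C>"
  unfolding locally_countable_def
proof
  fix x assume "x \<in> topspace T"
  then obtain W where "openin T W" "x \<in> W" "countable {V\<in>\<V>. V \<inter> W \<noteq> {}}"
    using assms(1) unfolding locally_countable_def by blast
  moreover have "{V\<in>\<C>. V \<inter> W \<noteq> {}} \<subseteq> {V\<in>\<V>. V \<inter> W \<noteq> {}}"
    using assms(2) by blast
  ultimately show "\<exists>W. openin T W \<and> x \<in> W \<and> countable {V\<in>\<C>. V \<inter> W \<noteq> {}}"
    using countable_subset by blast
qed

text \<open>Each \<open>V\<close> whose closure misses \<open>x\<close> is avoided by an open neighbourhood of \<open>x\<close>; only
  countably many such \<open>V\<close> meet a suitable neighbourhood \<open>W\<close>, so in a P-space the
  intersection of these countably many neighbourhoods with \<open>W\<close> is open and misses \<open>\<Union>\<C>\<close>.\<close>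

lemma closure_of_Union_locally_countable:
  assumes lc: "locally_countable T \<C>" and P: "P_space T"
  shows "T closure_of (\<Union>\<C>) = (\<Union>V\<in>\<C>. T closure_of V)"
proof
  show "T closure_of (\<Union>\<C>) \<subseteq> (\<Union>V\<in>\<C>. T closure_of V)"
  proof
    fix x assume x: "x \<in> T closure_of (\<Union>\<C>)"
    show "x \<in> (\<Union>V\<in>\<C>. T closure_of V)"
    proof (rule ccontr)
      assume far_all: "x \<notin> (\<Union>V\<in>\<C>. T closure_of V)"
      have xT: "x \<in> topspace T"
        using x by (simp add: in_closure_of)
      have far: "\<forall>V\<in>\<C>. \<exists>H. openin T H \<and> x \<in> H \<and> H \<inter> V = {}"
      proof
        fix V assume "V \<in> \<C>"
        then have "x \<notin> T closure_of V"
          using far_all by blast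
        then show "\<exists>H. openin T H \<and> x \<in> H \<and> H \<inter> V = {}"
          using xT unfolding in_closure_of by blast
      qed
      obtain W where W: "openin T W" "x \<in> W" and cD: "countable {V\<in>\<C>. V \<inter> W \<noteq> {}}"
        using lc xT unfolding locally_countable_def by blast
      define D where "D = {V\<in>\<C>. V \<inter> W \<noteq> {}}"
      have "\<forall>V\<in>D. \<exists>H. openin T H \<and> x \<in> H \<and> H \<inter> V = {}"
        using far unfolding D_def by blast
      then obtain H where H: "\<And>V. V \<in> D \<Longrightarrow> openin T (H V) \<and> x \<in> H V \<and> H V \<inter> V = {}"
        by (rule bchoice[elim_format]) blast
      define F where "F = insert W (H ` D)"
      have "countable F" "F \<noteq> {}"
        using cD unfolding F_def D_def by simp_all
      moreover have "\<forall>G\<in>F. openin T G"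
        using W(1) H unfolding F_def by blast
      ultimately have "openin T (\<Inter>F)"
        using P unfolding P_space_def by blast
      moreover have "x \<in> \<Inter>F"
        using W(2) H unfolding F_def by blast
      ultimately obtain y where y: "y \<in> \<Union>\<C>" "y \<in> \<Inter>F"
        using x unfolding in_closure_of by blast
      then obtain V where V: "V \<in> \<C>" "y \<in> V"
        by blast
      have "y \<in> W"
        using y(2) unfolding F_def by simp
      then have "V \<in> D"
        using V unfolding D_def by blast
      then have "y \<in> H V"
        using y(2) unfolding F_def by simp
      with H[OF \<open>V \<in> D\<close>] V(2) show False
        by blast
    qed
  qed
  show "(\<Union>V\<in>\<C>. T closure_of V) \<subseteq> T closure_of (\<Union>\<C>)"
    by (intro UN_least closure_of_mono Union_upper)
qed

lemma ij_regular_regular_open_shrinking: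
  assumes reg: "ij_regular Ti Tj"
    and \<U>: "\<forall>U\<in>\<U>. openin Ti U" "\<Union>\<U> = topspace Ti"
  obtains \<W> where "\<forall>W\<in>\<W>. ij_regular_open Ti Tj W" "\<Union>\<W> = topspace Ti"
    and "\<forall>W\<in>\<W>. \<exists>U\<in>\<U>. Tj closure_of W \<subseteq> U"
proof
  define \<W> where "\<W> = {Ti interior_of (Tj closure_of V) | V. \<exists>U\<in>\<U>. Tj closure_of V \<subseteq> U}"
  show "\<forall>W\<in>\<W>. ij_regular_open Ti Tj W"
    unfolding \<W>_def by (auto intro: ij_regular_open_interior_closure)
  show "\<forall>W\<in>\<W>. \<exists>U\<in>\<U>. Tj closure_of W \<subseteq> U"
  proof
    fix W assume "W \<in> \<W>"
    then obtain V U where "W = Ti interior_of (Tj closure_of V)" "U \<in> \<U>" "Tj closure_of V \<subseteq> U"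
      unfolding \<W>_def by blast
    moreover have "Tj closure_of (Ti interior_of (Tj closure_of V)) \<subseteq> Tj closure_of V"
      using closure_of_mono[OF interior_of_subset, of Tj Ti "Tj closure_of V"] by simp
    ultimately show "\<exists>U\<in>\<U>. Tj closure_of W \<subseteq> U"
      by blast
  qed
  have "topspace Ti \<subseteq> \<Union>\<W>"
  proof
    fix x assume "x \<in> topspace Ti"
    then obtain U where "U \<in> \<U>" "x \<in> U"
      using \<U>(2) by blast
    then obtain V where V: "openin Ti V" "x \<in> V" "V \<subseteq> Tj closure_of V" "Tj closure_of V \<subseteq> U"
      using reg \<U>(1) unfolding ij_regular_def by meson
    then have "x \<in> Ti interior_of (Tj closure_of V)"
      by (meson interior_of_maximal subsetD)
    with V(4) \<open>U \<in> \<U>\<close> show "x \<in> \<Union>\<W>"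
      unfolding \<W>_def by blast
  qed
  moreover have "\<Union>\<W> \<subseteq> topspace Ti"
    unfolding \<W>_def using interior_of_subset_topspace[of Ti] by blast
  ultimately show "\<Union>\<W> = topspace Ti"
    by (rule subset_antisym[rotated])
qed

lemma Lindelof_space_if_nearly_paralindelof_weakly_Lindelof:
  assumes np: "ij1_nearly_paralindelof Ti Tj"
    and reg: "ij_regular Ti Tj"
    and P: "P_space Tj"
    and wL: "ij_weakly_Lindelof Ti Tj"
  shows "Lindelof_space Ti"
  unfolding Lindelof_space_def
proof (intro allI impI)
  fix \<U> assume \<U>: "(\<forall>U\<in>\<U>. openin Ti U) \<and> \<Union>\<U> = topspace Ti"
  obtain \<W> where \<W>: "\<forall>W\<in>\<W>. ij_regular_open Ti Tj W" "\<Union>\<W> = topspace Ti"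
    and cl\<W>: "\<forall>W\<in>\<W>. \<exists>U\<in>\<U>. Tj closure_of W \<subseteq> U"
    using ij_regular_regular_open_shrinking[OF reg conjunct1[OF \<U>] conjunct2[OF \<U>]] by blast
  obtain \<V> where \<V>: "refines \<V> \<W>" "\<forall>V\<in>\<V>. openin Ti V" "\<Union>\<V> = topspace Ti"
    and lc: "locally_countable Tj \<V>"
    using np \<W> unfolding ij1_nearly_paralindelof_def by meson
  obtain \<C> where \<C>: "\<C> \<subseteq> \<V>" "countable \<C>" and dense: "Tj closure_of (\<Union>\<C>) = topspace Ti"
    using wL \<V> unfolding ij_weakly_Lindelof_def by meson
  have "\<forall>V\<in>\<C>. \<exists>U. U \<in> \<U> \<and> Tj closure_of V \<subseteq> U"
  proof
    fix V assume "V \<in> \<C>"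
    obtain W where "W \<in> \<W>" "V \<subseteq> W"
      using \<V>(1) \<C>(1) \<open>V \<in> \<C>\<close> unfolding refines_def by blast
    moreover obtain U where "U \<in> \<U>" "Tj closure_of W \<subseteq> U"
      using cl\<W> \<open>W \<in> \<W>\<close> by blast
    ultimately show "\<exists>U. U \<in> \<U> \<and> Tj closure_of V \<subseteq> U"
      using closure_of_mono[of V W Tj] by blast
  qed
  then obtain f where f: "\<And>V. V \<in> \<C> \<Longrightarrow> f V \<in> \<U> \<and> Tj closure_of V \<subseteq> f V"
    by (rule bchoice[elim_format]) blast
  have "topspace Ti = (\<Union>V\<in>\<C>. Tj closure_of V)"
    using dense closure_of_Union_locally_countable[OF locally_countable_subset[OF lc \<C>(1)] P]
    by simp
  then have "topspace Ti \<subseteq> \<Union>(f ` \<C>)"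
    using f by blast
  moreover have "\<Union>(f ` \<C>) \<subseteq> topspace Ti"
    using f \<U> by blast
  ultimately have "\<Union>(f ` \<C>) = topspace Ti"
    by (rule subset_antisym[rotated])
  with \<C>(2) f show "\<exists>\<U>'. countable \<U>' \<and> \<U>' \<subseteq> \<U> \<and> \<Union>\<U>' = topspace Ti"
    by blast
qed

theorem mainTheorem7:
  fixes \<tau>1 \<tau>2 :: "'a topology" and i j :: nat
  assumes "topspace \<tau>1 = topspace \<tau>2"
    and "i \<in> {1,2}" and "j \<in> {1,2}" and "i \<noteq> j"
    and "ij1_nearly_paralindelof (bitop \<tau>1 \<tau>2 i) (bitop \<tau>1 \<tau>2 j)"
    and "ij_regular (bitop \<tau>1 \<tau>2 i) (bitop \<tau>1 \<tau>2 j)"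
    and "P_space (bitop \<tau>1 \<tau>2 j)"
    and "ij_weakly_Lindelof (bitop \<tau>1 \<tau>2 i) (bitop \<tau>1 \<tau>2 j)"
  shows "Lindelof_space (bitop \<tau>1 \<tau>2 i)"
  using assms(5-8) by (rule Lindelof_space_if_nearly_paralindelof_weakly_Lindelof)

end
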